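(* Let $d\ge 2$ and $\ell\ge 2$. The subKautz digraph $sK(d,\ell)$ has the same girth as the cyclic Kautz digraph $CK(d,\ell+1)$; in particular its girth is at least the smallest positive integer $k$ such that $\ell+1\not\equiv 1\pmod k$ (equivalently, $k\nmid \ell$).
   Context: SubKautz digraph $sK(d,\ell)$: vertices $x_1\ldots x_\ell\in\mathbb Z_{d+1}^\ell$ with $x_i\neq x_{i+1}$; arcs $x_1\ldots x_\ell\to x_2\ldots x_\ell x_{\ell+1}$ for $x_{\ell+1}\neq x_1,x_\ell$. Cyclic Kautz digraph $CK(d,m)$: vertices $x_1\ldots x_m\in\mathbb Z_{d+1}^m$ with $x_i\neq x_{i+1}$ ($1\le i\le m-1$) and $x_m\neq x_1$; arcs $x_1\ldots x_m\to x_2\ldots x_m y$ for $y\neq x_2,x_m$. The girth is the length of a shortest directed cycle. *)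

theory Defs
  imports Main
begin

definition sK_verts :: "nat \<Rightarrow> nat \<Rightarrow> nat list set" where
  "sK_verts d l = {xs. length xs = l \<and> set xs \<subseteq> {0..d} \<and>
      (\<forall>i. Suc i < l \<longrightarrow> xs ! i \<noteq> xs ! Suc i)}"

definition sK_arc :: "nat \<Rightarrow> nat \<Rightarrow> nat list \<Rightarrow> nat list \<Rightarrow> bool" where
  "sK_arc d l xs ys \<longleftrightarrow> xs \<in> sK_verts d l \<and> ys \<in> sK_verts d l \<and>
      (\<exists>y. ys = tl xs @ [y] \<and> y \<noteq> hd xs \<and> y \<noteq> last xs)"

definition CK_verts :: "nat \<Rightarrow> nat \<Rightarrow> nat list set" where
  "CK_verts d m = {xs. length xs = m \<and> set xs \<subseteq> {0..d} \<and>
      (\<forall>i. Suc i < m \<longrightarrow> xs ! i \<noteq> xs ! Suc i) \<and> last xs \<noteq> hd xs}"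

definition CK_arc :: "nat \<Rightarrow> nat \<Rightarrow> nat list \<Rightarrow> nat list \<Rightarrow> bool" where
  "CK_arc d m xs ys \<longleftrightarrow> xs \<in> CK_verts d m \<and> ys \<in> CK_verts d m \<and>
      (\<exists>y. ys = tl xs @ [y] \<and> y \<noteq> xs ! 1 \<and> y \<noteq> last xs)"

definition has_cycle :: "'a set \<Rightarrow> ('a \<Rightarrow> 'a \<Rightarrow> bool) \<Rightarrow> nat \<Rightarrow> bool" where
  "has_cycle V A k \<longleftrightarrow> k \<ge> 1 \<and> (\<exists>f :: nat \<Rightarrow> 'a.
      (\<forall>i<k. f i \<in> V \<and> A (f i) (f (Suc i))) \<and> f k = f 0 \<and> inj_on f {..<k})"

definition girth :: "'a set \<Rightarrow> ('a \<Rightarrow> 'a \<Rightarrow> bool) \<Rightarrow> nat" where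
  "girth V A = (LEAST k. has_cycle V A k)"

end

theory Submission
  imports Defs
begin

text \<open>A shortest closed walk is a cycle, so the girth is the least length of a closed walk, and
closed walks can be compared instead of cycles. Appending to each vertex of sK(d,l) the symbol
appended by the next arc turns a closed walk into one of the same length in CK(d,l+1); deleting the
last symbol of each vertex goes back. In a walk of sK(d,l) every symbol moves one position to the
left per step, so l steps after a vertex the first symbol is the one appended at the first step,
which differs from the current first symbol: no closed walk has a length dividing l. Finally, a
proper 3-colouring of the cycle of length l+1 read through a sliding window yields a closed walk of
length l+1, so the girth is attained.\<close>

definition infinite_walk :: "'a set \<Rightarrow> ('a \<Rightarrow> 'a \<Rightarrow> bool) \<Rightarrow> (nat \<Rightarrow> 'a) \<Rightarrow> bool" where
  "infinite_walk V A f \<longleftrightarrow> (\<forall>i. f i \<in> V \<and> A (f i) (f (Suc i)))"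

definition has_closed_walk :: "'a set \<Rightarrow> ('a \<Rightarrow> 'a \<Rightarrow> bool) \<Rightarrow> nat \<Rightarrow> bool" where
  "has_closed_walk V A k \<longleftrightarrow> k \<ge> 1 \<and> (\<exists>f :: nat \<Rightarrow> 'a.
      (\<forall>i<k. f i \<in> V \<and> A (f i) (f (Suc i))) \<and> f k = f 0)"

lemma has_cycle_imp_has_closed_walk: "has_cycle V A k \<Longrightarrow> has_closed_walk V A k"
  unfolding has_cycle_def has_closed_walk_def by blast

lemma has_closed_walk_imp_has_cycle: "has_closed_walk V A k \<Longrightarrow> \<exists>j\<le>k. has_cycle V A j"
proof (induction k rule: less_induct)
  case (less k)
  then obtain f where k: "k \<ge> 1" and f: "\<forall>i<k. f i \<in> V \<and> A (f i) (f (Suc i))"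
    and closed: "f k = f 0"
    unfolding has_closed_walk_def by blast
  show ?case
  proof (cases "inj_on f {..<k}")
    case True
    with k f closed have "has_cycle V A k" unfolding has_cycle_def by blast
    then show ?thesis by blast
  next
    case False
    then obtain a b where ab: "a < b" "b < k" "f a = f b"
      unfolding inj_on_def by (metis lessThan_iff linorder_neqE_nat)
    have "has_closed_walk V A (b - a)"
      unfolding has_closed_walk_def
      using ab f by (intro conjI exI[of _ "\<lambda>n. f (a + n)"]) auto
    moreover have "b - a < k" using ab by simp
    ultimately obtain j where "j \<le> b - a" "has_cycle V A j" using less.IH by blast
    then show ?thesis using ab by (intro exI[of _ j]) simp
  qed
qed

lemma girth_eq_Least_closed_walk: "girth V A = (LEAST k. has_closed_walk V A k)"
proof (cases "\<exists>k. has_closed_walk V A k")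
  case True
  define m where "m = (LEAST k. has_closed_walk V A k)"
  have "has_closed_walk V A m"
    unfolding m_def using True by (metis LeastI)
  then obtain j where j: "j \<le> m" "has_cycle V A j"
    using has_closed_walk_imp_has_cycle by blast
  have minimal: "m \<le> k" if "has_cycle V A k" for k
    unfolding m_def using that by (intro Least_le has_cycle_imp_has_closed_walk)
  have "(LEAST k. has_cycle V A k) = m"
    using j minimal[OF j(2)] by (intro Least_equality) (auto intro: minimal)
  then show ?thesis unfolding girth_def m_def .
next
  case False
  then have "has_cycle V A = (\<lambda>k. False)" "has_closed_walk V A = (\<lambda>k. False)"
    using has_cycle_imp_has_closed_walk by blast+
  then show ?thesis unfolding girth_def by simp
qed

lemma has_closed_walk_iff_periodic_walk:
  "has_closed_walk V A k \<longleftrightarrow> k \<ge> 1 \<and> (\<exists>f. infinite_walk V A f \<and> (\<forall>i. f (i + k) = f i))"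
proof
  assume "has_closed_walk V A k"
  then obtain f where k: "k \<ge> 1" and f: "\<forall>i<k. f i \<in> V \<and> A (f i) (f (Suc i))"
    and closed: "f k = f 0"
    unfolding has_closed_walk_def by blast
  define g where "g i = f (i mod k)" for i
  have "g (Suc i) = f (Suc (i mod k))" for i
    unfolding g_def mod_Suc using closed by auto
  then have "infinite_walk V A g"
    unfolding infinite_walk_def using f k by (simp add: g_def)
  moreover have "\<forall>i. g (i + k) = g i" unfolding g_def by simp
  ultimately show "k \<ge> 1 \<and> (\<exists>f. infinite_walk V A f \<and> (\<forall>i. f (i + k) = f i))"
    using k by blast
next
  assume "k \<ge> 1 \<and> (\<exists>f. infinite_walk V A f \<and> (\<forall>i. f (i + k) = f i))"
  then show "has_closed_walk V A k"
    unfolding has_closed_walk_def infinite_walk_def by (metis add_0)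
qed

lemma periodic_add_mult:
  fixes k c :: nat
  assumes "\<And>i. f (i + k) = f i"
  shows "f (i + c * k) = f i"
proof (induction c)
  case (Suc c)
  have "f (i + Suc c * k) = f (i + c * k + k)" by (simp add: algebra_simps)
  also have "\<dots> = f i" using assms Suc.IH by simp
  finally show ?case .
qed simp

text \<open>Mapping a walk arc by arc covers both graph homomorphisms (F x y = h x) and
line-digraph-like constructions, where a new vertex is read off an arc.\<close>

lemma infinite_walk_arc_map:
  assumes walk: "infinite_walk V A f"
    and vert: "\<And>x y. x \<in> V \<Longrightarrow> y \<in> V \<Longrightarrow> A x y \<Longrightarrow> F x y \<in> W"
    and arc: "\<And>x y z. x \<in> V \<Longrightarrow> y \<in> V \<Longrightarrow> z \<in> V \<Longrightarrow> A x y \<Longrightarrow> A y z \<Longrightarrow>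
      B (F x y) (F y z)"
  shows "infinite_walk W B (\<lambda>i. F (f i) (f (Suc i)))"
  using walk unfolding infinite_walk_def by (simp add: vert arc)

lemma has_closed_walk_arc_map:
  assumes "has_closed_walk V A k"
    and "\<And>x y. x \<in> V \<Longrightarrow> y \<in> V \<Longrightarrow> A x y \<Longrightarrow> F x y \<in> W"
    and "\<And>x y z. x \<in> V \<Longrightarrow> y \<in> V \<Longrightarrow> z \<in> V \<Longrightarrow> A x y \<Longrightarrow> A y z \<Longrightarrow>
      B (F x y) (F y z)"
  shows "has_closed_walk W B k"
proof -
  obtain f where k: "k \<ge> 1" and walk: "infinite_walk V A f" and per: "\<And>i. f (i + k) = f i"
    using assms(1) unfolding has_closed_walk_iff_periodic_walk by blast
  have "infinite_walk W B (\<lambda>i. F (f i) (f (Suc i)))"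
    using infinite_walk_arc_map[OF walk] assms(2,3) by blast
  moreover have "F (f (i + k)) (f (Suc (i + k))) = F (f i) (f (Suc i))" for i
    using per[of i] per[of "Suc i"] by simp
  ultimately show ?thesis
    unfolding has_closed_walk_iff_periodic_walk using k by blast
qed

lemma sK_verts_successively:
  "xs \<in> sK_verts d l \<longleftrightarrow> length xs = l \<and> set xs \<subseteq> {0..d} \<and> successively (\<noteq>) xs"
  unfolding sK_verts_def successively_conv_nth by auto

lemma CK_verts_successively:
  "xs \<in> CK_verts d m \<longleftrightarrow>
    length xs = m \<and> set xs \<subseteq> {0..d} \<and> successively (\<noteq>) xs \<and> last xs \<noteq> hd xs"
  unfolding CK_verts_def successively_conv_nth by auto

lemma sK_arc_shift:
  assumes "sK_arc d l xs ys"
  shows "ys = tl xs @ [last ys] \<and> last ys \<noteq> hd xs \<and> last ys \<noteq> last xs"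
  using assms unfolding sK_arc_def by auto

lemma sK_arc_extend_in_CK_verts:
  assumes "l \<ge> 2" and arc: "sK_arc d l xs ys"
  shows "xs @ [last ys] \<in> CK_verts d (l + 1)"
proof -
  have xs: "xs \<in> sK_verts d l" and ys: "ys \<in> sK_verts d l"
    using arc unfolding sK_arc_def by auto
  then have "xs \<noteq> []" "ys \<noteq> []" using \<open>l \<ge> 2\<close> by (auto simp: sK_verts_successively)
  then have "last ys \<in> set ys" by simp
  with \<open>xs \<noteq> []\<close> show ?thesis
    using xs ys sK_arc_shift[OF arc]
    by (auto simp: sK_verts_successively CK_verts_successively successively_append_iff)
qed

lemma sK_arcs_extend_to_CK_arc:
  assumes "l \<ge> 2" and xy: "sK_arc d l xs ys" and yz: "sK_arc d l ys zs"
  shows "CK_arc d (l + 1) (xs @ [last ys]) (ys @ [last zs])"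
proof -
  have "length xs = l" using xy unfolding sK_arc_def sK_verts_def by simp
  then obtain x x' xs' where xs: "xs = x # x' # xs'"
    using \<open>l \<ge> 2\<close> by (cases xs; cases "tl xs") auto
  have ys: "ys = x' # xs' @ [last ys]" using sK_arc_shift[OF xy] xs by simp
  then have "hd ys = x'" by (metis list.sel(1))
  have "ys @ [last zs] = tl (xs @ [last ys]) @ [last zs]" using ys xs by simp
  moreover have "last zs \<noteq> (xs @ [last ys]) ! 1"
    using sK_arc_shift[OF yz] xs \<open>hd ys = x'\<close> by simp
  moreover have "last zs \<noteq> last (xs @ [last ys])" using sK_arc_shift[OF yz] by simp
  ultimately show ?thesis
    unfolding CK_arc_def using sK_arc_extend_in_CK_verts[OF \<open>l \<ge> 2\<close>] xy yz by blast
qed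

lemma CK_verts_butlast_in_sK_verts:
  assumes "xs \<in> CK_verts d (l + 1)"
  shows "butlast xs \<in> sK_verts d l"
proof -
  have "xs \<noteq> []" using assms by (auto simp: CK_verts_successively)
  then have "xs = butlast xs @ [last xs]" by simp
  then have "successively (\<noteq>) (butlast xs)"
    using assms successively_append_iff[of "(\<noteq>)" "butlast xs" "[last xs]"]
    by (auto simp: CK_verts_successively)
  then show ?thesis
    using assms by (auto simp: CK_verts_successively sK_verts_successively dest: in_set_butlastD)
qed

lemma CK_arc_butlast_sK_arc:
  assumes "l \<ge> 2" and arc: "CK_arc d (l + 1) xs ys"
  shows "sK_arc d l (butlast xs) (butlast ys)"
proof -
  have xs: "xs \<in> CK_verts d (l + 1)" and ys: "ys \<in> CK_verts d (l + 1)"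
    and shift: "\<exists>y. ys = tl xs @ [y]"
    using arc unfolding CK_arc_def by auto
  have "length (butlast xs) = l" using xs by (simp add: CK_verts_successively)
  then have ne: "butlast xs \<noteq> []"
    using \<open>l \<ge> 2\<close> by (metis list.size(3) not_numeral_le_zero)
  then have "xs \<noteq> []" by auto
  have "successively (\<noteq>) (butlast xs @ [last xs])" "last xs \<noteq> hd (butlast xs @ [last xs])"
    using xs \<open>xs \<noteq> []\<close> by (auto simp: CK_verts_successively)
  then have "last xs \<noteq> last (butlast xs)" "last xs \<noteq> hd (butlast xs)"
    using ne by (auto simp: successively_append_iff)
  moreover have "butlast ys = tl (butlast xs @ [last xs])"
    using shift \<open>xs \<noteq> []\<close> by auto
  then have "butlast ys = tl (butlast xs) @ [last xs]"
    using ne by simp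
  ultimately show ?thesis
    unfolding sK_arc_def using CK_verts_butlast_in_sK_verts xs ys by blast
qed

lemma has_closed_walk_sK_iff_CK:
  assumes "l \<ge> 2"
  shows "has_closed_walk (sK_verts d l) (sK_arc d l) k \<longleftrightarrow>
    has_closed_walk (CK_verts d (l + 1)) (CK_arc d (l + 1)) k"
proof
  assume "has_closed_walk (sK_verts d l) (sK_arc d l) k"
  then show "has_closed_walk (CK_verts d (l + 1)) (CK_arc d (l + 1)) k"
    by (rule has_closed_walk_arc_map[where F = "\<lambda>xs ys. xs @ [last ys]"])
      (use assms sK_arc_extend_in_CK_verts sK_arcs_extend_to_CK_arc in auto)
next
  assume "has_closed_walk (CK_verts d (l + 1)) (CK_arc d (l + 1)) k"
  then show "has_closed_walk (sK_verts d l) (sK_arc d l) k"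
    by (rule has_closed_walk_arc_map[where F = "\<lambda>xs ys. butlast xs"])
      (use assms CK_arc_butlast_sK_arc sK_arc_def in auto)
qed

lemma sK_walk_nth_shift:
  assumes walk: "infinite_walk (sK_verts d l) (sK_arc d l) f" and "m + j < l"
  shows "f (i + j) ! m = f i ! (m + j)"
  using \<open>m + j < l\<close>
proof (induction j arbitrary: m)
  case (Suc j)
  have arc: "sK_arc d l (f (i + j)) (f (Suc (i + j)))"
    and len: "length (f (i + j)) = l"
    using walk unfolding infinite_walk_def sK_verts_def by auto
  have "f (i + Suc j) ! m = (tl (f (i + j)) @ [last (f (i + Suc j))]) ! m"
    using sK_arc_shift[OF arc] by simp
  also have "\<dots> = f (i + j) ! Suc m"
    using Suc.prems len by (simp add: nth_append nth_tl less_diff_conv)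
  also have "\<dots> = f i ! (m + Suc j)"
    using Suc.IH[of "Suc m"] Suc.prems by simp
  finally show ?case .
qed simp

lemma sK_walk_hd_add_neq:
  assumes walk: "infinite_walk (sK_verts d l) (sK_arc d l) f" and "l \<ge> 1"
  shows "hd (f (i + l)) \<noteq> hd (f i)"
proof -
  have arc: "sK_arc d l (f i) (f (Suc i))" and len: "\<And>j. length (f j) = l"
    using walk unfolding infinite_walk_def sK_verts_def by auto
  have ne: "\<And>j. f j \<noteq> []" using len \<open>l \<ge> 1\<close> by (metis list.size(3) not_one_le_zero)
  have "hd (f (i + l)) = f (Suc i + (l - 1)) ! 0"
    using ne \<open>l \<ge> 1\<close> by (simp add: hd_conv_nth)
  also have "\<dots> = f (Suc i) ! (0 + (l - 1))"
    by (rule sK_walk_nth_shift[OF walk]) (use \<open>l \<ge> 1\<close> in simp)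
  also have "\<dots> = last (f (Suc i))"
    using ne len by (simp add: last_conv_nth)
  finally show ?thesis using sK_arc_shift[OF arc] by simp
qed

lemma sK_closed_walk_length_not_dvd:
  assumes "l \<ge> 1" and "has_closed_walk (sK_verts d l) (sK_arc d l) k"
  shows "\<not> k dvd l"
proof
  assume "k dvd l"
  then obtain c where l: "l = k * c" by (rule dvdE)
  obtain f where walk: "infinite_walk (sK_verts d l) (sK_arc d l) f"
    and per: "\<And>i. f (i + k) = f i"
    using assms(2) unfolding has_closed_walk_iff_periodic_walk by blast
  have "f l = f 0" using periodic_add_mult[of f k 0 c] per by (simp add: l mult.commute)
  with sK_walk_hd_add_neq[OF walk \<open>l \<ge> 1\<close>, of 0] show False by simp
qed

lemma sK_has_closed_walk_sliding_window:
  assumes "l \<ge> 1" and bound: "\<And>j. s j \<le> d" and proper: "\<And>j. s (Suc j) \<noteq> s j"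
    and per: "\<And>j. s (j + (l + 1)) = s j"
  shows "has_closed_walk (sK_verts d l) (sK_arc d l) (l + 1)"
proof -
  define f where "f i = map s [i..<i + l]" for i
  have vert: "f i \<in> sK_verts d l" for i
    unfolding f_def sK_verts_def using bound not_sym[OF proper] by auto
  have "sK_arc d l (f i) (f (Suc i))" for i
  proof -
    have "f (Suc i) = tl (f i) @ [s (i + l)]"
      unfolding f_def using \<open>l \<ge> 1\<close> by (simp flip: map_tl)
    moreover have "s (i + l) \<noteq> hd (f i)"
      using proper[of "i + l"] per[of i] \<open>l \<ge> 1\<close> unfolding f_def by (simp add: hd_map)
    moreover have "s (i + l) \<noteq> last (f i)"
      using proper[of "i + l - 1"] \<open>l \<ge> 1\<close> unfolding f_def by (simp add: last_map)
    ultimately show ?thesis unfolding sK_arc_def using vert by blast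
  qed
  then have "infinite_walk (sK_verts d l) (sK_arc d l) f"
    unfolding infinite_walk_def using vert by blast
  moreover have "f (i + (l + 1)) = f i" for i
  proof -
    have "s (i + (l + 1) + n) = s (i + n)" for n
      using per[of "i + n"] by (simp add: algebra_simps)
    then show ?thesis unfolding f_def by (intro nth_equalityI) (simp_all del: upt_Suc)
  qed
  ultimately show ?thesis
    unfolding has_closed_walk_iff_periodic_walk by auto
qed

definition cycle_colouring :: "nat \<Rightarrow> nat \<Rightarrow> nat" where
  "cycle_colouring n j = (if j mod n = n - 1 then 2 else j mod n mod 2)"

lemma cycle_colouring_le: "cycle_colouring n j \<le> 2"
  unfolding cycle_colouring_def by auto

lemma cycle_colouring_add_period: "cycle_colouring n (j + n) = cycle_colouring n j"
  unfolding cycle_colouring_def by simp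

lemma cycle_colouring_Suc_neq:
  assumes "n \<ge> 2"
  shows "cycle_colouring n (Suc j) \<noteq> cycle_colouring n j"
proof (cases "j mod n = n - 1")
  case True
  then have "Suc j mod n = 0" using assms by (simp add: mod_Suc)
  then show ?thesis using True assms unfolding cycle_colouring_def by simp
next
  case False
  then have "Suc j mod n = Suc (j mod n)"
    using assms by (simp add: mod_Suc)
  moreover have "Suc r mod 2 \<noteq> r mod 2" for r :: nat by presburger
  ultimately show ?thesis using False unfolding cycle_colouring_def by auto
qed

theorem mainTheorem11:
  fixes d l :: nat
  assumes "d \<ge> 2" and "l \<ge> 2"
  shows "girth (sK_verts d l) (sK_arc d l) = girth (CK_verts d (l + 1)) (CK_arc d (l + 1))
       \<and> girth (sK_verts d l) (sK_arc d l) \<ge> (LEAST k::nat. 0 < k \<and> \<not> k dvd l)"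
proof
  show "girth (sK_verts d l) (sK_arc d l) = girth (CK_verts d (l + 1)) (CK_arc d (l + 1))"
    unfolding girth_eq_Least_closed_walk has_closed_walk_sK_iff_CK[OF \<open>l \<ge> 2\<close>] ..
  have "has_closed_walk (sK_verts d l) (sK_arc d l) (l + 1)"
    using assms cycle_colouring_le[of "l + 1"] cycle_colouring_Suc_neq[of "l + 1"]
      cycle_colouring_add_period[of "l + 1"]
    by (intro sK_has_closed_walk_sliding_window[where s = "cycle_colouring (l + 1)"])
      (auto intro: order_trans)
  then have "has_closed_walk (sK_verts d l) (sK_arc d l) (girth (sK_verts d l) (sK_arc d l))"
    unfolding girth_eq_Least_closed_walk by (rule LeastI)
  then have "0 < girth (sK_verts d l) (sK_arc d l)" "\<not> girth (sK_verts d l) (sK_arc d l) dvd l"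
    using sK_closed_walk_length_not_dvd[of l] \<open>l \<ge> 2\<close> by (auto simp: has_closed_walk_def)
  then show "girth (sK_verts d l) (sK_arc d l) \<ge> (LEAST k::nat. 0 < k \<and> \<not> k dvd l)"
    by (intro Least_le) simp
qed

end
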